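(* For every $\lambda>\lambda^*$, $\partial_eF(\lambda,e(\lambda))>0$.
   Context: Standing setup. Let $\gamma>0$; let $a_1,\dots,a_p>0$ with weights $\omega_i>0$, $\sum_i\omega_i=1$, and $b_1,\dots,b_n>0$ with weights $\pi_j>0$, $\sum_j\pi_j=1$. Let $\mu$ be the limiting spectral distribution of $\mathbf{N}\mathbf{N}^T$ where $\mathbf{N}=\mathbf{A}^{1/2}\mathbf{G}\mathbf{B}^{1/2}$ is $k\times l$, $\mathbf{G}$ has iid mean-zero entries of variance $1/l$, $k/l\to\gamma$, and the spectral distributions of $\mathbf{A},\mathbf{B}$ converge to $\nu=\sum_i\omega_i\delta_{a_i}$ and $\underline{\nu}=\sum_j\pi_j\delta_{b_j}$. $\mu$ is a compactly supported probability measure on $[0,\infty)$; $\lambda^*>0$ is the right endpoint of its support, and $s(\lambda)=\int\frac{d\mu(t)}{t-\lambda}$ for $\lambda>\lambda^*$. Define $G(e)=\sum_{j=1}^n\frac{b_j\pi_j}{1+\gamma b_j e}$ and $F(\lambda,e)=e-\sum_{i=1}^p\frac{a_i\omega_i}{a_iG(e)-\lambda}$. It is known (master equations) that there is a smooth real function $e(\lambda)$ on $(\lambda^*,\infty)$, never equal to a pole $-1/(\gamma b_j)$ of $G$ and with $a_iG(e(\lambda))\ne\lambda$, satisfying $s(\lambda)=\sum_{i=1}^p\frac{\omega_i}{a_iG(e(\lambda))-\lambda}$ and $F(\lambda,e(\lambda))=0$. *)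

theory Defs
  imports "HOL-Probability.Probability"
begin

definition Gfun :: "real \<Rightarrow> nat \<Rightarrow> (nat \<Rightarrow> real) \<Rightarrow> (nat \<Rightarrow> real) \<Rightarrow> real \<Rightarrow> real" where
  "Gfun \<gamma> n b \<pi> e = (\<Sum>j<n. b j * \<pi> j / (1 + \<gamma> * b j * e))"

definition Ffun :: "real \<Rightarrow> nat \<Rightarrow> (nat \<Rightarrow> real) \<Rightarrow> (nat \<Rightarrow> real) \<Rightarrow> nat \<Rightarrow> (nat \<Rightarrow> real) \<Rightarrow> (nat \<Rightarrow> real)
     \<Rightarrow> real \<Rightarrow> real \<Rightarrow> real" where
  "Ffun \<gamma> p a \<omega> n b \<pi> lam e = e - (\<Sum>i<p. a i * \<omega> i / (a i * Gfun \<gamma> n b \<pi> e - lam))"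

definition msupport :: "real measure \<Rightarrow> real set" where
  "msupport M = {x. \<forall>\<epsilon>>0. emeasure M (ball x \<epsilon>) > 0}"

definition stieltjes :: "real measure \<Rightarrow> real \<Rightarrow> real" where
  "stieltjes M lam = (\<integral>t. 1 / (t - lam) \<partial>M)"

end

theory Submission
  imports Defs
begin

text \<open>Write \<open>\<Phi>(\<lambda>) = \<partial>\<^sub>eF(\<lambda>, e(\<lambda>))\<close>. Differentiating \<open>F(\<lambda>, e(\<lambda>)) = 0\<close> gives
  \<open>e'(\<lambda>) \<Phi>(\<lambda>) = \<Sum>\<^sub>i a\<^sub>i \<omega>\<^sub>i / (a\<^sub>i G(e(\<lambda>)) - \<lambda>)\<^sup>2 > 0\<close>, so the continuous function \<open>\<Phi>\<close>
  never vanishes on \<open>(\<lambda>\<^sup>*, \<infinity>)\<close> and has constant sign there. For the sign look at large \<open>\<lambda>\<close>: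
  the master equations give \<open>G(e) e = 1 + \<lambda> s(\<lambda>)\<close> and \<open>|1 + \<lambda> s(\<lambda>)| \<le> 1\<close> once \<open>\<lambda> \<ge> 2\<lambda>\<^sup>*\<close>,
  which forces \<open>e(\<lambda>) = O(1/\<lambda>)\<close>; then \<open>G\<close> and \<open>G'\<close> stay bounded and
  \<open>\<Phi> = 1 + G'(e) \<Sum>\<^sub>i a\<^sub>i\<^sup>2 \<omega>\<^sub>i / (a\<^sub>i G(e) - \<lambda>)\<^sup>2 = 1 + O(1/\<lambda>\<^sup>2)\<close>.\<close>

lemma AE_in_msupport:
  fixes M :: "real measure"
  assumes "sets M = sets borel"
  shows "AE t in M. t \<in> msupport M"
proof -
  define N where "N = {ball x \<epsilon> | x \<epsilon>. \<epsilon> > 0 \<and> emeasure M (ball x \<epsilon>) = 0}"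
  obtain N' where N': "N' \<subseteq> N" "countable N'" "\<Union>N' = \<Union>N"
    using Lindelof[of N] unfolding N_def by auto
  have "AE t in M. \<forall>B\<in>N'. t \<notin> B"
  proof (rule AE_ball_countable'[OF _ N'(2)])
    fix B assume "B \<in> N'"
    then obtain x \<epsilon> where "B = ball x \<epsilon>" "emeasure M (ball x \<epsilon>) = 0"
      using N'(1) unfolding N_def by auto
    then show "AE t in M. t \<notin> B"
      using assms by (intro AE_not_in) (simp add: null_sets_def)
  qed
  moreover have "t \<in> msupport M" if "\<forall>B\<in>N'. t \<notin> B" for t
  proof (rule ccontr)
    assume "t \<notin> msupport M"
    then obtain \<epsilon> where "\<epsilon> > 0" "emeasure M (ball t \<epsilon>) = 0"
      unfolding msupport_def by (auto simp: not_less)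
    then have "t \<in> \<Union>N" unfolding N_def by force
    then show False using that N'(3) by auto
  qed
  ultimately show ?thesis by auto
qed

lemma abs_one_plus_mult_stieltjes_le:
  fixes M :: "real measure"
  assumes "prob_space M" "sets M = sets borel" "x > 0"
    and AE_range: "AE t in M. 0 \<le> t \<and> 2 * t \<le> x"
  shows "\<bar>1 + x * stieltjes M x\<bar> \<le> 1"
proof -
  interpret prob_space M by fact
  have int: "integrable M (\<lambda>t. 1 / (t - x))"
  proof (rule integrable_const_bound[where B = "2 / x"])
    show "AE t in M. norm (1 / (t - x)) \<le> 2 / x"
      using AE_range by eventually_elim (use \<open>x > 0\<close> in \<open>auto simp: divide_simps\<close>)
    show "(\<lambda>t. 1 / (t - x)) \<in> borel_measurable M"
      unfolding measurable_cong_sets[OF assms(2) refl] by measurable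
  qed
  have "1 + x * stieltjes M x = (\<integral>t. 1 \<partial>M) + (\<integral>t. x * (1 / (t - x)) \<partial>M)"
    unfolding stieltjes_def integral_mult_right_zero by (simp add: prob_space)
  also have "\<dots> = (\<integral>t. 1 + x * (1 / (t - x)) \<partial>M)"
    using integrable_mult_right[OF int, of x]
    by (intro Bochner_Integration.integral_add[symmetric]) auto
  also have "\<bar>\<dots>\<bar> \<le> (\<integral>t. \<bar>1 + x * (1 / (t - x))\<bar> \<partial>M)"
    using integral_norm_bound[of M "\<lambda>t. 1 + x * (1 / (t - x))"] by simp
  also have "\<dots> \<le> (\<integral>t. 1 \<partial>M)"
  proof (rule integral_mono_AE')
    show "AE t in M. \<bar>1 + x * (1 / (t - x))\<bar> \<le> 1"
      using AE_range by eventually_elim (use \<open>x > 0\<close> in \<open>auto simp: divide_simps abs_if\<close>)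
  qed auto
  also have "\<dots> = 1" by (simp add: prob_space)
  finally show ?thesis .
qed

definition dGfun :: "real \<Rightarrow> nat \<Rightarrow> (nat \<Rightarrow> real) \<Rightarrow> (nat \<Rightarrow> real) \<Rightarrow> real \<Rightarrow> real" where
  "dGfun \<gamma> n b \<pi> e = - (\<Sum>j<n. \<gamma> * b j ^ 2 * \<pi> j / (1 + \<gamma> * b j * e) ^ 2)"

definition dFfun :: "real \<Rightarrow> nat \<Rightarrow> (nat \<Rightarrow> real) \<Rightarrow> (nat \<Rightarrow> real) \<Rightarrow> nat \<Rightarrow> (nat \<Rightarrow> real) \<Rightarrow> (nat \<Rightarrow> real)
     \<Rightarrow> real \<Rightarrow> real \<Rightarrow> real" where
  "dFfun \<gamma> p a \<omega> n b \<pi> lam e =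
     1 + dGfun \<gamma> n b \<pi> e * (\<Sum>i<p. a i ^ 2 * \<omega> i / (a i * Gfun \<gamma> n b \<pi> e - lam) ^ 2)"

lemma has_real_derivative_Gfun:
  assumes "\<And>j. j < n \<Longrightarrow> 1 + \<gamma> * b j * e \<noteq> 0"
  shows "(Gfun \<gamma> n b \<pi> has_real_derivative dGfun \<gamma> n b \<pi> e) (at e)"
proof -
  have "((\<lambda>e. \<Sum>j<n. b j * \<pi> j / (1 + \<gamma> * b j * e)) has_real_derivative
      (\<Sum>j<n. - (\<gamma> * b j ^ 2 * \<pi> j / (1 + \<gamma> * b j * e) ^ 2))) (at e)"
    using assms by (intro DERIV_sum derivative_eq_intros refl) (auto simp: field_simps power2_eq_square)
  then show ?thesis unfolding Gfun_def[abs_def] dGfun_def by (simp add: sum_negf)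
qed

lemma has_real_derivative_Ffun:
  assumes "\<And>j. j < n \<Longrightarrow> 1 + \<gamma> * b j * e \<noteq> 0"
    and "\<And>i. i < p \<Longrightarrow> a i * Gfun \<gamma> n b \<pi> e \<noteq> lam"
  shows "(Ffun \<gamma> p a \<omega> n b \<pi> lam has_real_derivative dFfun \<gamma> p a \<omega> n b \<pi> lam e) (at e)"
proof -
  note G = has_real_derivative_Gfun[OF assms(1)]
  have "((\<lambda>e. \<Sum>i<p. a i * \<omega> i / (a i * Gfun \<gamma> n b \<pi> e - lam)) has_real_derivative
      (\<Sum>i<p. - (dGfun \<gamma> n b \<pi> e * (a i ^ 2 * \<omega> i / (a i * Gfun \<gamma> n b \<pi> e - lam) ^ 2)))) (at e)"
    using assms(2) by (intro DERIV_sum derivative_eq_intros G refl)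
      (auto simp: G field_simps power2_eq_square)
  from DERIV_diff[OF DERIV_ident this] show ?thesis
    unfolding Ffun_def[abs_def] dFfun_def by (simp add: sum_negf sum_distrib_left)
qed

lemma has_real_derivative_Ffun_along:
  assumes f: "(f has_real_derivative f') (at x)"
    and "\<And>j. j < n \<Longrightarrow> 1 + \<gamma> * b j * f x \<noteq> 0"
    and "\<And>i. i < p \<Longrightarrow> a i * Gfun \<gamma> n b \<pi> (f x) \<noteq> x"
  shows "((\<lambda>l. Ffun \<gamma> p a \<omega> n b \<pi> l (f l)) has_real_derivative
      f' * dFfun \<gamma> p a \<omega> n b \<pi> x (f x) - (\<Sum>i<p. a i * \<omega> i / (a i * Gfun \<gamma> n b \<pi> (f x) - x) ^ 2)) (at x)"
proof -
  note G = DERIV_chain2[OF has_real_derivative_Gfun[OF assms(2)] f]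
  have "((\<lambda>l. \<Sum>i<p. a i * \<omega> i / (a i * Gfun \<gamma> n b \<pi> (f l) - l)) has_real_derivative
      (\<Sum>i<p. a i * \<omega> i / (a i * Gfun \<gamma> n b \<pi> (f x) - x) ^ 2
        - f' * (dGfun \<gamma> n b \<pi> (f x) * (a i ^ 2 * \<omega> i / (a i * Gfun \<gamma> n b \<pi> (f x) - x) ^ 2)))) (at x)"
  proof (rule DERIV_sum)
    fix i assume "i \<in> {..<p}"
    then have "a i * Gfun \<gamma> n b \<pi> (f x) - x \<noteq> 0" using assms(3) by auto
    then show "((\<lambda>l. a i * \<omega> i / (a i * Gfun \<gamma> n b \<pi> (f l) - l)) has_real_derivative
        a i * \<omega> i / (a i * Gfun \<gamma> n b \<pi> (f x) - x) ^ 2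
        - f' * (dGfun \<gamma> n b \<pi> (f x) * (a i ^ 2 * \<omega> i / (a i * Gfun \<gamma> n b \<pi> (f x) - x) ^ 2))) (at x)"
      by (auto intro!: derivative_eq_intros G simp: divide_simps power2_eq_square)
        (simp add: algebra_simps)
  qed
  from DERIV_diff[OF f this] show ?thesis
    unfolding Ffun_def[abs_def] dFfun_def
    by (simp add: sum_subtractf sum_distrib_left algebra_simps)
qed

lemma dFfun_along_root_curve_nonzero:
  assumes "p > 0" "\<And>i. i < p \<Longrightarrow> a i > 0" "\<And>i. i < p \<Longrightarrow> \<omega> i > 0"
    and f: "(f has_real_derivative f') (at x)"
    and nonpole: "\<And>j. j < n \<Longrightarrow> 1 + \<gamma> * b j * f x \<noteq> 0"
    and nonsing: "\<And>i. i < p \<Longrightarrow> a i * Gfun \<gamma> n b \<pi> (f x) \<noteq> x"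
    and root: "\<forall>\<^sub>F l in nhds x. Ffun \<gamma> p a \<omega> n b \<pi> l (f l) = 0"
  shows "dFfun \<gamma> p a \<omega> n b \<pi> x (f x) \<noteq> 0"
proof
  assume "dFfun \<gamma> p a \<omega> n b \<pi> x (f x) = 0"
  moreover have "((\<lambda>l. Ffun \<gamma> p a \<omega> n b \<pi> l (f l)) has_real_derivative 0) (at x)"
    using DERIV_cong_ev[OF refl root refl] by simp
  note DERIV_unique[OF has_real_derivative_Ffun_along[OF f nonpole nonsing] this]
  ultimately have "(\<Sum>i<p. a i * \<omega> i / (a i * Gfun \<gamma> n b \<pi> (f x) - x) ^ 2) = 0"
    by simp
  moreover have "(\<Sum>i<p. a i * \<omega> i / (a i * Gfun \<gamma> n b \<pi> (f x) - x) ^ 2) > 0"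
    using assms(1-3) nonsing by (intro sum_pos) auto
  ultimately show False by simp
qed

lemma isCont_dFfun_along:
  assumes "isCont f x"
    and "\<And>j. j < n \<Longrightarrow> 1 + \<gamma> * b j * f x \<noteq> 0"
    and "\<And>i. i < p \<Longrightarrow> a i * Gfun \<gamma> n b \<pi> (f x) \<noteq> x"
  shows "isCont (\<lambda>l. dFfun \<gamma> p a \<omega> n b \<pi> l (f l)) x"
  using assms unfolding dFfun_def dGfun_def Gfun_def
  by (intro continuous_intros) auto

lemma Gfun_denominator_ge_half:
  fixes \<gamma> :: real
  assumes "\<gamma> > 0" "b j > 0" "b j \<le> B" "\<bar>y\<bar> \<le> 1 / (2 * \<gamma> * B)"
  shows "1 + \<gamma> * b j * y \<ge> 1 / 2"
proof -
  have "\<bar>\<gamma> * b j * y\<bar> = (\<gamma> * b j) * \<bar>y\<bar>" using assms by (simp add: abs_mult)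
  also have "\<dots> \<le> (\<gamma> * B) * (1 / (2 * \<gamma> * B))" using assms by (intro mult_mono) auto
  also have "\<dots> = 1 / 2" using assms by simp
  finally show ?thesis by linarith
qed

lemma abs_Gfun_le:
  assumes "\<gamma> > 0" "\<And>j. j < n \<Longrightarrow> b j > 0" "\<And>j. j < n \<Longrightarrow> 0 \<le> \<pi> j \<and> \<pi> j \<le> 1"
    and "\<bar>y\<bar> \<le> 1 / (2 * \<gamma> * (\<Sum>j<n. b j))"
  shows "\<bar>Gfun \<gamma> n b \<pi> y\<bar> \<le> 2 * (\<Sum>j<n. b j)"
proof -
  have term_le: "\<bar>b j * \<pi> j / (1 + \<gamma> * b j * y)\<bar> \<le> 2 * b j" if j: "j < n" for j
  proof -
    have bj: "b j > 0" and \<pi>j: "0 \<le> \<pi> j" "\<pi> j \<le> 1" using assms(2,3) j by auto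
    have "b j \<le> (\<Sum>j<n. b j)"
      using assms(2) j by (intro member_le_sum) (auto intro: less_imp_le)
    then have "1 + \<gamma> * b j * y \<ge> 1 / 2"
      using assms j by (intro Gfun_denominator_ge_half) auto
    moreover have "b j * \<pi> j \<le> b j" using bj \<pi>j by (simp add: mult_left_le)
    ultimately have "b j * \<pi> j / (1 + \<gamma> * b j * y) \<le> b j / (1 / 2)"
      using bj \<pi>j by (intro frac_le) auto
    moreover have "b j * \<pi> j / (1 + \<gamma> * b j * y) \<ge> 0"
      using bj \<pi>j \<open>1 + \<gamma> * b j * y \<ge> 1 / 2\<close> by simp
    ultimately show ?thesis by (simp only: abs_of_nonneg) simp
  qed
  have "\<bar>Gfun \<gamma> n b \<pi> y\<bar> \<le> (\<Sum>j<n. \<bar>b j * \<pi> j / (1 + \<gamma> * b j * y)\<bar>)"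
    unfolding Gfun_def by (rule sum_abs)
  also have "\<dots> \<le> (\<Sum>j<n. 2 * b j)" using term_le by (intro sum_mono) auto
  finally show ?thesis by (simp add: sum_distrib_left)
qed

lemma abs_dGfun_le:
  assumes "\<gamma> > 0" "\<And>j. j < n \<Longrightarrow> b j > 0" "\<And>j. j < n \<Longrightarrow> 0 \<le> \<pi> j \<and> \<pi> j \<le> 1"
    and "\<bar>y\<bar> \<le> 1 / (2 * \<gamma> * (\<Sum>j<n. b j))"
  shows "\<bar>dGfun \<gamma> n b \<pi> y\<bar> \<le> 4 * \<gamma> * (\<Sum>j<n. b j) ^ 2"
proof -
  define B where "B = (\<Sum>j<n. b j)"
  have term_le: "\<bar>\<gamma> * b j ^ 2 * \<pi> j / (1 + \<gamma> * b j * y) ^ 2\<bar> \<le> 4 * \<gamma> * B * b j"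
    if j: "j < n" for j
  proof -
    have bj: "b j > 0" using assms(2) j by simp
    have bB: "b j \<le> B"
      unfolding B_def using assms(2) j by (intro member_le_sum) (auto intro: less_imp_le)
    then have "1 + \<gamma> * b j * y \<ge> 1 / 2"
      using assms j unfolding B_def by (intro Gfun_denominator_ge_half) auto
    then have "(1 + \<gamma> * b j * y) ^ 2 \<ge> 1 / 4"
      using power_mono[of "1/2" "1 + \<gamma> * b j * y" 2] by (simp add: power2_eq_square)
    moreover have "\<gamma> * b j ^ 2 * \<pi> j \<le> \<gamma> * B * b j"
    proof -
      have "b j * \<pi> j \<le> b j" using assms(2,3) j by (simp add: mult_left_le)
      with bB have "b j * \<pi> j \<le> B" by linarith
      then show ?thesis using assms(1,2) j by (simp add: power2_eq_square mult_left_mono)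
    qed
    ultimately have "\<gamma> * b j ^ 2 * \<pi> j / (1 + \<gamma> * b j * y) ^ 2 \<le> \<gamma> * B * b j / (1 / 4)"
      using assms(1) bj bB by (intro frac_le) auto
    moreover have "\<gamma> * b j ^ 2 * \<pi> j / (1 + \<gamma> * b j * y) ^ 2 \<ge> 0"
      using assms(1,3) j by simp
    ultimately show ?thesis by (simp only: abs_of_nonneg) simp
  qed
  have "\<bar>dGfun \<gamma> n b \<pi> y\<bar> \<le> (\<Sum>j<n. \<bar>\<gamma> * b j ^ 2 * \<pi> j / (1 + \<gamma> * b j * y) ^ 2\<bar>)"
    unfolding dGfun_def abs_minus_cancel by (rule sum_abs)
  also have "\<dots> \<le> (\<Sum>j<n. 4 * \<gamma> * B * b j)" using term_le by (intro sum_mono) auto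
  also have "\<dots> = 4 * \<gamma> * B ^ 2"
    by (simp only: sum_distrib_left[symmetric]) (simp add: B_def power2_eq_square)
  finally show ?thesis unfolding B_def .
qed

lemma abs_master_root_le:
  fixes a \<omega> :: "nat \<Rightarrow> real"
  assumes a_pos: "\<And>i. i < p \<Longrightarrow> a i > 0" and \<omega>_nonneg: "\<And>i. i < p \<Longrightarrow> 0 \<le> \<omega> i"
    and \<omega>_sum: "(\<Sum>i<p. \<omega> i) = 1"
    and "x > 0" and nonsing: "\<And>i. i < p \<Longrightarrow> a i * g \<noteq> x"
    and e_eq: "e = (\<Sum>i<p. a i * \<omega> i / (a i * g - x))"
    and s_bound: "\<bar>1 + x * (\<Sum>i<p. \<omega> i / (a i * g - x))\<bar> \<le> 1"
  shows "\<bar>e\<bar> \<le> 2 * (\<Sum>i<p. a i) / x"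
proof -
  define A where "A = (\<Sum>i<p. a i)"
  have "p \<noteq> 0" using \<omega>_sum by (metis lessThan_0 sum.empty zero_neq_one)
  then have "A > 0" unfolding A_def using a_pos by (intro sum_pos) auto
  have "g * e = (\<Sum>i<p. \<omega> i + x * (\<omega> i / (a i * g - x)))"
    unfolding e_eq sum_distrib_left
    by (intro sum.cong refl) (use nonsing in \<open>auto simp: field_simps\<close>)
  also have "\<dots> = 1 + x * (\<Sum>i<p. \<omega> i / (a i * g - x))"
    by (simp add: sum.distrib sum_distrib_left \<omega>_sum)
  finally have "\<bar>g\<bar> * \<bar>e\<bar> \<le> 1" using s_bound by (simp add: abs_mult)
  \<comment> \<open>A large \<open>g\<close> is controlled by the identity just proved, a small one by the formula for \<open>e\<close>.\<close>
  show ?thesis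
  proof (cases "\<bar>g\<bar> \<ge> x / (2 * A)")
    case True
    with \<open>A > 0\<close> \<open>x > 0\<close> have "\<bar>g\<bar> > 0" by (smt (verit) divide_pos_pos)
    with \<open>\<bar>g\<bar> * \<bar>e\<bar> \<le> 1\<close> have "\<bar>e\<bar> \<le> 1 / \<bar>g\<bar>" by (simp add: field_simps)
    also have "\<dots> \<le> 1 / (x / (2 * A))"
      using True \<open>\<bar>g\<bar> > 0\<close> \<open>A > 0\<close> \<open>x > 0\<close> by (intro divide_left_mono) auto
    finally show ?thesis unfolding A_def by simp
  next
    case False
    have "\<bar>a i * \<omega> i / (a i * g - x)\<bar> \<le> a i * (2 / x)" if i: "i < p" for i
    proof -
      have "a i \<le> A"
        unfolding A_def using a_pos i by (intro member_le_sum) (auto intro: less_imp_le)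
      then have "\<bar>a i * g\<bar> \<le> A * \<bar>g\<bar>"
        using a_pos[OF i] by (simp add: abs_mult mult_right_mono)
      also have "\<dots> < x / 2" using False \<open>A > 0\<close> by (simp add: field_simps)
      finally have "x / 2 < \<bar>a i * g - x\<bar>" by linarith
      have "\<omega> i \<le> 1"
        using \<omega>_sum member_le_sum[of i "{..<p}" \<omega>] \<omega>_nonneg i by auto
      have "\<bar>a i * \<omega> i / (a i * g - x)\<bar> = a i * \<omega> i / \<bar>a i * g - x\<bar>"
        using a_pos[OF i] \<omega>_nonneg[OF i] by (simp add: abs_mult)
      also have "\<dots> \<le> a i * 1 / (x / 2)"
        using \<open>x / 2 < \<bar>a i * g - x\<bar>\<close> \<open>\<omega> i \<le> 1\<close> a_pos[OF i] \<omega>_nonneg[OF i] \<open>x > 0\<close>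
        by (intro frac_le mult_left_mono) auto
      finally show ?thesis by simp
    qed
    then have "\<bar>e\<bar> \<le> (\<Sum>i<p. a i * (2 / x))"
      unfolding e_eq by (intro order.trans[OF sum_abs] sum_mono) auto
    also have "\<dots> = 2 * (\<Sum>i<p. a i) / x" by (subst sum_distrib_right[symmetric]) simp
    finally show ?thesis .
  qed
qed

lemma dFfun_pos_near_origin:
  fixes p n :: nat and a \<omega> b \<pi> :: "nat \<Rightarrow> real"
  defines "A \<equiv> \<Sum>i<p. a i" and "B \<equiv> \<Sum>j<n. b j"
  assumes "\<gamma> > 0" "\<And>j. j < n \<Longrightarrow> b j > 0" "\<And>j. j < n \<Longrightarrow> 0 \<le> \<pi> j \<and> \<pi> j \<le> 1"
    and a_pos: "\<And>i. i < p \<Longrightarrow> a i > 0" and \<omega>_nonneg: "\<And>i. i < p \<Longrightarrow> 0 \<le> \<omega> i"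
    and \<omega>_sum: "(\<Sum>i<p. \<omega> i) = 1"
    and y: "\<bar>y\<bar> \<le> 1 / (2 * \<gamma> * B)"
    and x_gt: "x > 4 * A * B" and x_sq_gt: "x ^ 2 > 16 * \<gamma> * A ^ 2 * B ^ 2"
  shows "dFfun \<gamma> p a \<omega> n b \<pi> x y > 0"
proof -
  define g where "g = Gfun \<gamma> n b \<pi> y"
  define D where "D = (\<Sum>i<p. a i ^ 2 * \<omega> i / (a i * g - x) ^ 2)"
  have "\<bar>g\<bar> \<le> 2 * B" unfolding g_def B_def using assms y by (intro abs_Gfun_le) auto
  have "A \<ge> 0" unfolding A_def using a_pos by (intro sum_nonneg) (auto intro: less_imp_le)
  moreover have "B \<ge> 0" unfolding B_def using assms(4) by (intro sum_nonneg) (auto intro: less_imp_le)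
  ultimately have "x > 0" using x_gt by (smt (verit) mult_nonneg_nonneg)
  have term_le: "a i ^ 2 * \<omega> i / (a i * g - x) ^ 2 \<le> \<omega> i * (4 * A ^ 2 / x ^ 2)" if i: "i < p" for i
  proof -
    have aA: "a i \<le> A"
      unfolding A_def using a_pos i by (intro member_le_sum) (auto intro: less_imp_le)
    have "\<bar>a i * g\<bar> \<le> A * (2 * B)"
      using aA a_pos[OF i] \<open>\<bar>g\<bar> \<le> 2 * B\<close> by (simp add: abs_mult mult_mono)
    then have "x / 2 \<le> \<bar>a i * g - x\<bar>" using x_gt by linarith
    then have "(x / 2) ^ 2 \<le> (a i * g - x) ^ 2"
      using power_mono[of "x / 2" "\<bar>a i * g - x\<bar>" 2] \<open>x > 0\<close> by simp
    moreover have "a i ^ 2 * \<omega> i \<le> A ^ 2 * \<omega> i"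
      using aA a_pos[OF i] \<omega>_nonneg[OF i] by (intro mult_right_mono power_mono) auto
    ultimately have "a i ^ 2 * \<omega> i / (a i * g - x) ^ 2 \<le> A ^ 2 * \<omega> i / (x / 2) ^ 2"
      using \<omega>_nonneg[OF i] \<open>x > 0\<close> by (intro frac_le) auto
    then show ?thesis by (simp add: field_simps power2_eq_square)
  qed
  have "D \<le> (\<Sum>i<p. \<omega> i * (4 * A ^ 2 / x ^ 2))"
    unfolding D_def using term_le by (intro sum_mono) auto
  also have "\<dots> = 4 * A ^ 2 / x ^ 2" by (subst sum_distrib_right[symmetric]) (simp add: \<omega>_sum)
  finally have "D \<le> 4 * A ^ 2 / x ^ 2" .
  moreover have "D \<ge> 0" unfolding D_def using \<omega>_nonneg by (intro sum_nonneg) auto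
  moreover have "\<bar>dGfun \<gamma> n b \<pi> y\<bar> \<le> 4 * \<gamma> * B ^ 2"
    unfolding B_def using assms y by (intro abs_dGfun_le) auto
  ultimately have "\<bar>dGfun \<gamma> n b \<pi> y * D\<bar> \<le> 4 * \<gamma> * B ^ 2 * (4 * A ^ 2 / x ^ 2)"
    unfolding abs_mult by (intro mult_mono) auto
  also have "\<dots> < 1" using x_sq_gt \<open>x > 0\<close> by (simp add: field_simps)
  finally show ?thesis unfolding dFfun_def g_def[symmetric] D_def[symmetric] by linarith
qed

lemma eventually_dFfun_pos_on_root_curve:
  fixes a \<omega> b \<pi> :: "nat \<Rightarrow> real" and e :: "real \<Rightarrow> real"
  assumes "\<gamma> > 0" "n \<ge> 1" "\<And>j. j < n \<Longrightarrow> b j > 0" "\<And>j. j < n \<Longrightarrow> 0 \<le> \<pi> j \<and> \<pi> j \<le> 1"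
    and "\<And>i. i < p \<Longrightarrow> a i > 0" "\<And>i. i < p \<Longrightarrow> 0 \<le> \<omega> i" "(\<Sum>i<p. \<omega> i) = 1"
    and master: "\<forall>\<^sub>F x in at_top. Ffun \<gamma> p a \<omega> n b \<pi> x (e x) = 0
      \<and> (\<forall>i<p. a i * Gfun \<gamma> n b \<pi> (e x) \<noteq> x)
      \<and> \<bar>1 + x * (\<Sum>i<p. \<omega> i / (a i * Gfun \<gamma> n b \<pi> (e x) - x))\<bar> \<le> 1"
  shows "\<forall>\<^sub>F x in at_top. dFfun \<gamma> p a \<omega> n b \<pi> x (e x) > 0"
proof -
  define A where "A = (\<Sum>i<p. a i)"
  define B where "B = (\<Sum>j<n. b j)"
  have "B > 0" unfolding B_def using assms(2,3) by (intro sum_pos) (auto simp: lessThan_empty_iff)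
  have "A \<ge> 0" unfolding A_def using assms(5) by (intro sum_nonneg) (auto intro: less_imp_le)
  then have AB: "0 \<le> A * B" "0 \<le> \<gamma> * A * B" using \<open>B > 0\<close> \<open>\<gamma> > 0\<close> by simp_all
  have "filterlim (\<lambda>x::real. x ^ 2) at_top at_top"
    by (intro filterlim_pow_at_top filterlim_ident) auto
  then have "\<forall>\<^sub>F x in at_top. x ^ 2 > 16 * \<gamma> * A ^ 2 * B ^ 2"
    by (simp add: filterlim_at_top_dense)
  moreover note master
  moreover have "\<forall>\<^sub>F x in at_top. x > 4 * \<gamma> * A * B + 4 * A * B"
    by (rule eventually_gt_at_top)
  ultimately show ?thesis
  proof eventually_elim
    case (elim x)
    then have "x > 4 * A * B" "x \<ge> 4 * \<gamma> * A * B" "x > 0"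
      using AB by linarith+
    have "\<bar>e x\<bar> \<le> 2 * A / x"
      unfolding A_def using elim assms(5-7) \<open>x > 0\<close>
      by (intro abs_master_root_le[where g = "Gfun \<gamma> n b \<pi> (e x)"]) (auto simp: Ffun_def)
    also have "\<dots> \<le> 1 / (2 * \<gamma> * B)"
      using \<open>x \<ge> 4 * \<gamma> * A * B\<close> \<open>x > 0\<close> \<open>\<gamma> > 0\<close> \<open>B > 0\<close> by (simp add: field_simps)
    finally show ?case
      using elim assms(1,3-7) \<open>x > 4 * A * B\<close> unfolding A_def B_def
      by (intro dFfun_pos_near_origin) auto
  qed
qed

lemma connected_nonvanishing_pos:
  fixes f :: "'a::topological_space \<Rightarrow> real"
  assumes "connected S" "continuous_on S f" "\<And>x. x \<in> S \<Longrightarrow> f x \<noteq> 0"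
    and "x0 \<in> S" "f x0 > 0" "x \<in> S"
  shows "f x > 0"
proof (rule ccontr)
  assume "\<not> f x > 0"
  have "connected (f ` S)" using assms(1,2) by (rule connected_continuous_image[rotated])
  moreover have "f x \<in> f ` S" "f x0 \<in> f ` S" using assms(4,6) by auto
  ultimately have "0 \<in> f ` S"
    using \<open>\<not> f x > 0\<close> \<open>f x0 > 0\<close> unfolding connected_iff_interval by force
  then show False using assms(3) by auto
qed

lemma dFfun_pos_on_root_curve:
  fixes e :: "real \<Rightarrow> real"
  assumes "p > 0" "\<And>i. i < p \<Longrightarrow> a i > 0" "\<And>i. i < p \<Longrightarrow> \<omega> i > 0"
    and e_diff: "\<And>x. x > L \<Longrightarrow> e differentiable (at x)"
    and nonpole: "\<And>x j. x > L \<Longrightarrow> j < n \<Longrightarrow> 1 + \<gamma> * b j * e x \<noteq> 0"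
    and nonsing: "\<And>x i. x > L \<Longrightarrow> i < p \<Longrightarrow> a i * Gfun \<gamma> n b \<pi> (e x) \<noteq> x"
    and root: "\<And>x. x > L \<Longrightarrow> Ffun \<gamma> p a \<omega> n b \<pi> x (e x) = 0"
    and eventually_pos: "\<forall>\<^sub>F x in at_top. dFfun \<gamma> p a \<omega> n b \<pi> x (e x) > 0"
    and "x > L"
  shows "dFfun \<gamma> p a \<omega> n b \<pi> x (e x) > 0"
proof -
  let ?\<Phi> = "\<lambda>l. dFfun \<gamma> p a \<omega> n b \<pi> l (e l)"
  have e_deriv: "(e has_real_derivative deriv e l) (at l)" if "l > L" for l
    using e_diff[OF that] by (simp add: DERIV_deriv_iff_real_differentiable)
  have nonzero: "?\<Phi> l \<noteq> 0" if "l > L" for l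
  proof (rule dFfun_along_root_curve_nonzero[OF assms(1-3) e_deriv[OF that]])
    show "\<forall>\<^sub>F l' in nhds l. Ffun \<gamma> p a \<omega> n b \<pi> l' (e l') = 0"
      using eventually_nhds_in_open[of "{L<..}" l] that root by (auto elim!: eventually_mono)
  qed (use that nonpole nonsing in auto)
  have cont: "continuous_on {L<..} ?\<Phi>"
    using nonpole nonsing
    by (intro continuous_at_imp_continuous_on ballI isCont_dFfun_along DERIV_isCont[OF e_deriv]) auto
  obtain x0 where x0: "x0 > L" "?\<Phi> x0 > 0"
    using eventually_happens[OF eventually_conj[OF eventually_gt_at_top eventually_pos]] by auto
  show ?thesis
    by (rule connected_nonvanishing_pos[OF connected_Ioi cont _ _ x0(2)])
      (use nonzero x0(1) \<open>x > L\<close> in auto)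
qed

theorem proposition3p11:
  fixes \<gamma> :: real and p n :: nat and a \<omega> b \<pi> :: "nat \<Rightarrow> real"
    and \<mu> :: "real measure" and lamstar :: real and e :: "real \<Rightarrow> real"
  assumes \<gamma>_pos: "\<gamma> > 0"
    and p_pos: "p \<ge> 1" and n_pos: "n \<ge> 1"
    and a_pos: "\<And>i. i < p \<Longrightarrow> a i > 0" and \<omega>_pos: "\<And>i. i < p \<Longrightarrow> \<omega> i > 0"
    and \<omega>_sum: "(\<Sum>i<p. \<omega> i) = 1"
    and b_pos: "\<And>j. j < n \<Longrightarrow> b j > 0" and \<pi>_pos: "\<And>j. j < n \<Longrightarrow> \<pi> j > 0"
    and \<pi>_sum: "(\<Sum>j<n. \<pi> j) = 1"
    and \<mu>_prob: "prob_space \<mu>" and \<mu>_borel: "sets \<mu> = sets borel"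
    and supp_compact: "compact (msupport \<mu>)"
    and supp_nonneg: "msupport \<mu> \<subseteq> {0..}"
    and lamstar_def: "lamstar = Sup (msupport \<mu>)"
    and lamstar_pos: "lamstar > 0"
    and e_smooth: "\<And>k x. x > lamstar \<Longrightarrow> ((deriv ^^ k) e) differentiable (at x)"
    and e_nonpole: "\<And>x j. x > lamstar \<Longrightarrow> j < n \<Longrightarrow> 1 + \<gamma> * b j * e x \<noteq> 0"
    and e_nonsing: "\<And>x i. x > lamstar \<Longrightarrow> i < p \<Longrightarrow> a i * Gfun \<gamma> n b \<pi> (e x) \<noteq> x"
    and master_s: "\<And>x. x > lamstar \<Longrightarrow>
        stieltjes \<mu> x = (\<Sum>i<p. \<omega> i / (a i * Gfun \<gamma> n b \<pi> (e x) - x))"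
    and master_F: "\<And>x. x > lamstar \<Longrightarrow> Ffun \<gamma> p a \<omega> n b \<pi> x (e x) = 0"
  shows "\<forall>x > lamstar. deriv (\<lambda>y. Ffun \<gamma> p a \<omega> n b \<pi> x y) (e x) > 0"
proof -
  have \<pi>_le: "0 \<le> \<pi> j \<and> \<pi> j \<le> 1" if "j < n" for j
    using \<pi>_sum member_le_sum[of j "{..<n}" \<pi>] \<pi>_pos that by (auto intro: less_imp_le)
  have AE_supp: "AE t in \<mu>. 0 \<le> t \<and> t \<le> lamstar"
    using AE_in_msupport[OF \<mu>_borel] supp_nonneg cSup_upper[of _ "msupport \<mu>"]
      bounded_imp_bdd_above[OF compact_imp_bounded[OF supp_compact]]
    unfolding lamstar_def by (auto elim!: eventually_mono)
  have "\<forall>\<^sub>F x in at_top. Ffun \<gamma> p a \<omega> n b \<pi> x (e x) = 0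
      \<and> (\<forall>i<p. a i * Gfun \<gamma> n b \<pi> (e x) \<noteq> x)
      \<and> \<bar>1 + x * (\<Sum>i<p. \<omega> i / (a i * Gfun \<gamma> n b \<pi> (e x) - x))\<bar> \<le> 1"
    using eventually_ge_at_top[of "2 * lamstar"]
  proof eventually_elim
    case (elim x)
    then have "x > lamstar" using lamstar_pos by linarith
    moreover have "AE t in \<mu>. 0 \<le> t \<and> 2 * t \<le> x"
      using AE_supp by eventually_elim (use elim in auto)
    then have "\<bar>1 + x * stieltjes \<mu> x\<bar> \<le> 1"
      using \<open>x > lamstar\<close> lamstar_pos by (intro abs_one_plus_mult_stieltjes_le[OF \<mu>_prob \<mu>_borel]) auto
    ultimately show ?case using master_F e_nonsing master_s by simp
  qed
  then have "\<forall>\<^sub>F x in at_top. dFfun \<gamma> p a \<omega> n b \<pi> x (e x) > 0"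
    using \<gamma>_pos n_pos b_pos \<pi>_le a_pos \<omega>_pos \<omega>_sum
    by (intro eventually_dFfun_pos_on_root_curve) (auto intro: less_imp_le)
  then have "dFfun \<gamma> p a \<omega> n b \<pi> x (e x) > 0" if "x > lamstar" for x
    using p_pos a_pos \<omega>_pos e_smooth[of _ 0] e_nonpole e_nonsing master_F that
    by (intro dFfun_pos_on_root_curve[where L = lamstar]) auto
  moreover have "deriv (Ffun \<gamma> p a \<omega> n b \<pi> x) (e x) = dFfun \<gamma> p a \<omega> n b \<pi> x (e x)"
    if "x > lamstar" for x
    using e_nonpole e_nonsing that by (intro DERIV_imp_deriv has_real_derivative_Ffun) blast+
  ultimately show ?thesis by simp
qed

end
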